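(* Let $S$ be an infinite supernatural number and let $\lambda$ be a non-archimedean length function on $\widetilde{\mathbb Z_S}$. Then there exist a scale $s=(s_m)_{m\ge1}$ for $S$ and an increasing sequence $l=(l_m)_{m\ge1}$ of numbers in $(1,\infty)$ with $\lim_{m\to\infty}l_m=\infty$ such that $\lambda=\lambda_{s,l}$.
   Context: $\widetilde{\mathbb Z_S}=\{z\in\mathbb C: z^s=1\text{ for some natural number } s\mid S\}$. A non-archimedean length function on $\widetilde{\mathbb Z_S}$ is a function $\lambda:\widetilde{\mathbb Z_S}\to[1,\infty)$ such that (i) $\lambda(z)=1$ iff $z=1$; (ii) $\lambda(z_1z_2)\le\max\{\lambda(z_1),\lambda(z_2)\}$; (iii) for every $r\ge1$ the set $\{z:\lambda(z)\le r\}$ is finite. A scale for $S$ is a sequence of positive integers $(s_m)_{m\ge1}$ with $s_m\mid s_{m+1}$, $s_m<s_{m+1}$, $S=\mathrm{lcm}(s_m)$; set $s_0:=1$, $l_0:=1$. Every $z\ne1$ in $\widetilde{\mathbb Z_S}$ is uniquely $z=e^{2\pi ij/s_m}$ with $m\ge1$, $0<j<s_m$, $s_m/s_{m-1}\nmid j$, and $\lambda_{s,l}$ is defined by $\lambda_{s,l}(1)=1$ and $\lambda_{s,l}(e^{2\pi ij/s_m})=l_m$ for such $z$. *)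

theory Defs
  imports Complex_Main "HOL-Library.Extended_Nat" "HOL-Computational_Algebra.Primes"
begin

text \<open>A supernatural number is represented by its exponent function
  S :: nat \<Rightarrow> enat, where S p is the exponent of the prime p (values at
  non-primes are ignored).\<close>

definition supnat_dvd :: "nat \<Rightarrow> (nat \<Rightarrow> enat) \<Rightarrow> bool" where
  "supnat_dvd s S \<longleftrightarrow> s > 0 \<and> (\<forall>p. prime p \<longrightarrow> enat (multiplicity p s) \<le> S p)"

definition supnat_infinite :: "(nat \<Rightarrow> enat) \<Rightarrow> bool" where
  "supnat_infinite S \<longleftrightarrow>
     \<not> (\<exists>n>0. \<forall>p. prime p \<longrightarrow> S p = enat (multiplicity p n))"

definition ZS :: "(nat \<Rightarrow> enat) \<Rightarrow> complex set" where
  "ZS S = {z. \<exists>s. supnat_dvd s S \<and> z ^ s = 1}"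

definition nonarch_length :: "(nat \<Rightarrow> enat) \<Rightarrow> (complex \<Rightarrow> real) \<Rightarrow> bool" where
  "nonarch_length S lam \<longleftrightarrow>
     (\<forall>z\<in>ZS S. lam z \<ge> 1) \<and>
     (\<forall>z\<in>ZS S. lam z = 1 \<longleftrightarrow> z = 1) \<and>
     (\<forall>z1\<in>ZS S. \<forall>z2\<in>ZS S. lam (z1 * z2) \<le> max (lam z1) (lam z2)) \<and>
     (\<forall>r\<ge>1. finite {z\<in>ZS S. lam z \<le> r})"

text \<open>Scale (s_m)_{m \<ge> 1}; the value s 0 is ignored.  lcm(s_m) = S means
  that for every prime the supremum of the exponents equals that of S.\<close>
definition is_scale :: "(nat \<Rightarrow> enat) \<Rightarrow> (nat \<Rightarrow> nat) \<Rightarrow> bool" where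
  "is_scale S s \<longleftrightarrow>
     (\<forall>m\<ge>1. s m > 0 \<and> s m dvd s (Suc m) \<and> s m < s (Suc m)) \<and>
     (\<forall>p. prime p \<longrightarrow> (SUP m\<in>{1..}. enat (multiplicity p (s m))) = S p)"

definition scale_prev :: "(nat \<Rightarrow> nat) \<Rightarrow> nat \<Rightarrow> nat" where
  "scale_prev s m = (if m \<le> 1 then 1 else s (m - 1))"

definition scale_rep :: "(nat \<Rightarrow> nat) \<Rightarrow> nat \<Rightarrow> nat \<Rightarrow> complex \<Rightarrow> bool" where
  "scale_rep s m j z \<longleftrightarrow> m \<ge> 1 \<and> 0 < j \<and> j < s m \<and>
     \<not> (s m div scale_prev s m) dvd j \<and>
     z = exp (2 * pi * \<i> * of_nat j / of_nat (s m))"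

definition lambda_sl :: "(nat \<Rightarrow> nat) \<Rightarrow> (nat \<Rightarrow> real) \<Rightarrow> complex \<Rightarrow> real" where
  "lambda_sl s l z = (if z = 1 then 1 else l (THE m. \<exists>j. scale_rep s m j z))"

end

theory Submission
  imports Defs "HOL-Analysis.Complex_Transcendental"
begin

text \<open>For r \<ge> 1 the sublevel set {z. \<lambda> z \<le> r} is a finite subgroup of the circle, hence
  the group of all n-th roots of unity for n its cardinality. The values of \<lambda> form a set
  1 = v 0 < v 1 < ... with finite initial segments, infinite because S is, and the cardinalities
  s m of the sublevel sets at v m form a scale for S. Then z \<noteq> 1 has \<lambda> z = v m exactly when
  z is an (s m)-th but not an (s (m-1))-th root of unity, i.e. when its scale representation
  has level m.\<close>

definition root_unity :: "nat \<Rightarrow> nat \<Rightarrow> complex" where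
  "root_unity n j = exp (2 * pi * \<i> * of_nat j / of_nat n)"

lemma root_unity_power: "root_unity n j ^ k = root_unity n (j * k)"
proof -
  have "root_unity n j ^ k = exp (of_nat k * (2 * pi * \<i> * of_nat j / of_nat n))"
    unfolding root_unity_def by (rule exp_of_nat_mult[symmetric])
  also have "\<dots> = root_unity n (j * k)"
    unfolding root_unity_def by (simp add: algebra_simps)
  finally show ?thesis .
qed

lemma root_unity_power_eq_1_iff: "0 < n \<Longrightarrow> root_unity n j ^ k = 1 \<longleftrightarrow> n dvd j * k"
  unfolding root_unity_power unfolding root_unity_def
  using complex_root_unity_eq_1[of n "j * k"] by simp

lemma roots_unityE:
  assumes "0 < n" "z ^ n = 1"
  obtains j where "j < n" "z = root_unity n j"
  using assms complex_roots_unity[of n] unfolding root_unity_def by auto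

lemma power_eq_1_if_dvd:
  fixes z :: "'a :: monoid_mult"
  assumes "m dvd n" "z ^ m = 1"
  shows "z ^ n = 1"
  using assms by (auto elim!: dvdE simp: power_mult)

lemma finite_subgroup_eq_roots_unity:
  fixes G :: "complex set"
  assumes fin: "finite G" and one: "1 \<in> G" and nz: "0 \<notin> G"
    and mult: "\<And>x y. x \<in> G \<Longrightarrow> y \<in> G \<Longrightarrow> x * y \<in> G"
  shows "G = {z. z ^ card G = 1}"
proof (rule card_subset_eq)
  show "G \<subseteq> {z. z ^ card G = 1}"
  proof
    fix g assume g: "g \<in> G"
    have inj: "inj_on ((*) g) G"
      using g nz by (auto simp: inj_on_def)
    have "(*) g ` G = G"
      using mult g card_image[OF inj] by (intro card_subset_eq[OF fin]) auto
    then have "\<Prod>G = (\<Prod>x\<in>G. g * x)"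
      using prod.reindex[OF inj, of id] by simp
    also have "\<dots> = g ^ card G * \<Prod>G"
      by (simp add: prod.distrib)
    finally have "g ^ card G * \<Prod>G = 1 * \<Prod>G"
      by simp
    moreover have "\<Prod>G \<noteq> 0"
      using fin nz by (simp add: prod_zero_iff)
    ultimately show "g \<in> {z. z ^ card G = 1}"
      by simp
  qed
  have "0 < card G"
    using fin one card_gt_0_iff by blast
  then show "finite {z::complex. z ^ card G = 1}"
    by (intro finite_roots_unity) simp
  show "card G = card {z::complex. z ^ card G = 1}"
    using \<open>0 < card G\<close> by (simp add: card_roots_unity_eq)
qed

lemma enat_leI:
  fixes x y :: enat
  assumes "\<And>k. enat k \<le> x \<Longrightarrow> enat k \<le> y"
  shows "x \<le> y"
proof (cases x)
  case infinity
  have "y = \<infinity>"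
  proof (cases y)
    case (enat n)
    then show ?thesis
      using assms[of "Suc n"] infinity by simp
  qed
  then show ?thesis
    by simp
qed (use assms in simp)

lemma strict_mono_enumeration:
  fixes V :: "'a :: linorder set"
  assumes "infinite V" and finite_le: "\<And>x. finite {y \<in> V. y \<le> x}"
  obtains v :: "nat \<Rightarrow> 'a" where "strict_mono v" "range v = V"
proof -
  define idx where "idx x = card {y \<in> V. y < x}" for x
  have idx_less: "idx x < idx y" if "x \<in> V" "x < y" for x y
  proof -
    have "finite {y' \<in> V. y' < y}"
      by (rule finite_subset[OF _ finite_le[of y]]) auto
    then show ?thesis
      unfolding idx_def using that by (intro psubset_card_mono) auto
  qed
  have inj: "inj_on idx V"
  proof (rule linorder_inj_onI')
    fix x y assume "x \<in> V" "x < y"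
    then show "idx x \<noteq> idx y"
      using idx_less[of x y] by simp
  qed
  define N where "N = idx ` V"
  have "infinite N"
    unfolding N_def using inj assms(1) finite_image_iff by blast
  define v where "v m = the_inv_into V idx (enumerate N m)" for m
  have v_in: "v m \<in> V" and idx_v: "idx (v m) = enumerate N m" for m
  proof -
    have "enumerate N m \<in> idx ` V"
      using enumerate_in_set[OF \<open>infinite N\<close>] unfolding N_def .
    then show "v m \<in> V" "idx (v m) = enumerate N m"
      unfolding v_def using the_inv_into_into[OF inj] f_the_inv_into_f[OF inj] by auto
  qed
  have "strict_mono v"
  proof (rule strict_monoI)
    fix m n :: nat assume "m < n"
    then have "idx (v m) < idx (v n)"
      using \<open>infinite N\<close> by (simp add: idx_v)
    then show "v m < v n"
      using idx_less[OF v_in, of n "v m"] by (cases "v m" "v n" rule: linorder_cases) auto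
  qed
  moreover have "range v = V"
  proof -
    have "range v = the_inv_into V idx ` range (enumerate N)"
      unfolding v_def by auto
    also have "\<dots> = V"
      using range_enumerate[OF \<open>infinite N\<close>] the_inv_into_onto[OF inj] by (simp add: N_def)
    finally show ?thesis .
  qed
  ultimately show ?thesis
    using that by blast
qed

lemma one_in_ZS: "1 \<in> ZS S"
  unfolding ZS_def supnat_dvd_def by (auto intro!: exI[of _ 1] simp: zero_enat_def[symmetric])

lemma zero_notin_ZS: "0 \<notin> ZS S"
  unfolding ZS_def supnat_dvd_def by (auto simp: zero_power)

lemma mult_in_ZS:
  assumes "z1 \<in> ZS S" "z2 \<in> ZS S"
  shows "z1 * z2 \<in> ZS S"
proof -
  obtain s1 where s1: "supnat_dvd s1 S" "z1 ^ s1 = 1"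
    using assms(1) unfolding ZS_def by auto
  obtain s2 where s2: "supnat_dvd s2 S" "z2 ^ s2 = 1"
    using assms(2) unfolding ZS_def by auto
  have "supnat_dvd (lcm s1 s2) S"
    unfolding supnat_dvd_def
  proof (intro conjI allI impI)
    show "0 < lcm s1 s2"
      using s1(1) s2(1) by (simp add: supnat_dvd_def lcm_pos_nat)
    fix p :: nat assume "prime p"
    then show "enat (multiplicity p (lcm s1 s2)) \<le> S p"
      using s1(1) s2(1) by (simp add: supnat_dvd_def multiplicity_lcm max_def)
  qed
  moreover have "(z1 * z2) ^ lcm s1 s2 = 1"
    using power_eq_1_if_dvd[OF dvd_lcm1 s1(2)] power_eq_1_if_dvd[OF dvd_lcm2 s2(2)]
    by (simp add: power_mult_distrib)
  ultimately show ?thesis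
    unfolding ZS_def by auto
qed

lemma root_unity_in_ZS_iff:
  assumes "0 < n"
  shows "root_unity n 1 \<in> ZS S \<longleftrightarrow> supnat_dvd n S"
proof
  assume "root_unity n 1 \<in> ZS S"
  then obtain s where s: "supnat_dvd s S" "root_unity n 1 ^ s = 1"
    unfolding ZS_def by auto
  have "n dvd s" "0 < s"
    using s assms root_unity_power_eq_1_iff[of n] unfolding supnat_dvd_def by auto
  then have "multiplicity p n \<le> multiplicity p s" for p
    by (intro dvd_imp_multiplicity_le) auto
  then show "supnat_dvd n S"
    using s(1) assms unfolding supnat_dvd_def by (meson enat_ord_simps(1) order_trans)
next
  assume "supnat_dvd n S"
  then show "root_unity n 1 \<in> ZS S"
    unfolding ZS_def using assms root_unity_power_eq_1_iff[of n] by auto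
qed

lemma supnat_dvd_prime_power:
  assumes "prime p" "enat k \<le> S p"
  shows "supnat_dvd (p ^ k) S"
  unfolding supnat_dvd_def
proof (intro conjI allI impI)
  show "0 < p ^ k"
    using assms(1) by (simp add: prime_gt_0_nat)
  fix q :: nat assume q: "prime q"
  show "enat (multiplicity q (p ^ k)) \<le> S q"
    using assms multiplicity_distinct_prime_power[OF q assms(1)]
    by (cases "q = p") (auto simp: zero_enat_def[symmetric])
qed

lemma SUP_multiplicity_eq_exponent:
  assumes ZS_eq: "ZS S = (\<Union>m\<in>M. {z. z ^ s m = 1})" and pos: "\<And>m. m \<in> M \<Longrightarrow> 0 < s m"
    and p: "prime p"
  shows "(SUP m\<in>M. enat (multiplicity p (s m))) = S p"
proof (rule antisym)
  show "(SUP m\<in>M. enat (multiplicity p (s m))) \<le> S p"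
  proof (rule SUP_least)
    fix m assume "m \<in> M"
    then have "root_unity (s m) 1 \<in> ZS S"
      using ZS_eq pos root_unity_power_eq_1_iff[of "s m" 1 "s m"] by auto
    then have "supnat_dvd (s m) S"
      using root_unity_in_ZS_iff pos[OF \<open>m \<in> M\<close>] by simp
    then show "enat (multiplicity p (s m)) \<le> S p"
      using p unfolding supnat_dvd_def by simp
  qed
  show "S p \<le> (SUP m\<in>M. enat (multiplicity p (s m)))"
  proof (rule enat_leI)
    fix k assume "enat k \<le> S p"
    have pk: "0 < p ^ k"
      using p by (simp add: prime_gt_0_nat)
    have "root_unity (p ^ k) 1 \<in> ZS S"
      using supnat_dvd_prime_power[of p k S, OF p \<open>enat k \<le> S p\<close>] root_unity_in_ZS_iff[OF pk] by simp
    then obtain m where m: "m \<in> M" "root_unity (p ^ k) 1 ^ s m = 1"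
      using ZS_eq by auto
    then have "p ^ k dvd s m"
      using root_unity_power_eq_1_iff[OF pk] by simp
    then have "k \<le> multiplicity p (s m)"
      using pos[OF m(1)] p by (intro multiplicity_geI) (auto simp: not_prime_unit)
    then have "enat k \<le> enat (multiplicity p (s m))"
      by simp
    also have "\<dots> \<le> (SUP m\<in>M. enat (multiplicity p (s m)))"
      using m(1) by (rule SUP_upper)
    finally show "enat k \<le> (SUP m\<in>M. enat (multiplicity p (s m)))" .
  qed
qed

lemma infinite_ZS:
  assumes "supnat_infinite S"
  shows "infinite (ZS S)"
proof
  assume fin: "finite (ZS S)"
  define N where "N = card (ZS S)"
  have ZS_eq: "ZS S = {z. z ^ N = 1}"
    unfolding N_def using fin one_in_ZS zero_notin_ZS mult_in_ZS
    by (rule finite_subgroup_eq_roots_unity)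
  have "0 < N"
    unfolding N_def using fin one_in_ZS card_gt_0_iff by blast
  have "S p = enat (multiplicity p N)" if "prime p" for p
    using SUP_multiplicity_eq_exponent[where M = "{0}" and s = "\<lambda>_. N", OF _ _ that] ZS_eq \<open>0 < N\<close> by simp
  then show False
    using assms \<open>0 < N\<close> unfolding supnat_infinite_def by blast
qed

definition dvd_chain :: "(nat \<Rightarrow> nat) \<Rightarrow> bool" where
  "dvd_chain s \<longleftrightarrow> (\<forall>m\<ge>1. 0 < s m \<and> s m dvd s (Suc m))"

lemma scale_dvd_mono:
  assumes chain: "dvd_chain s" and "1 \<le> m" "m \<le> m'"
  shows "s m dvd s m'"
  using assms(3)
proof (induction m' rule: dec_induct)
  case (step k)
  then have "1 \<le> k"
    using assms(2) by linarith
  then have "s k dvd s (Suc k)"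
    using chain unfolding dvd_chain_def by blast
  then show ?case
    by (rule dvd_trans[OF step.IH])
qed simp

lemma
  assumes chain: "dvd_chain s" and "1 \<le> m"
  shows scale_prev_pos: "0 < scale_prev s m"
    and scale_prev_dvd: "scale_prev s m dvd s m"
  using chain[unfolded dvd_chain_def, rule_format, of "m - 1"] assms(2)
  by (auto simp: scale_prev_def)

lemma scale_dvd_prev:
  assumes chain: "dvd_chain s" and "1 \<le> m" "m < m'"
  shows "s m dvd scale_prev s m'"
  using scale_dvd_mono[OF chain, of m "m' - 1"] assms(2,3) by (simp add: scale_prev_def)

lemma scale_rep_iff:
  assumes chain: "dvd_chain s" and m: "1 \<le> m"
  shows "(\<exists>j. scale_rep s m j z) \<longleftrightarrow> z ^ s m = 1 \<and> z ^ scale_prev s m \<noteq> 1"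
proof -
  define p where "p = scale_prev s m"
  have "0 < p" "p dvd s m"
    unfolding p_def using scale_prev_pos[OF chain m] scale_prev_dvd[OF chain m] .
  then obtain d where d: "s m = d * p"
    by (auto elim!: dvdE simp: mult.commute)
  have sm: "0 < s m"
    using chain m unfolding dvd_chain_def by blast
  have quotient: "s m div p = d"
    using d \<open>0 < p\<close> by simp
  have root_prev_iff: "root_unity (s m) j ^ p = 1 \<longleftrightarrow> d dvd j" for j
    using root_unity_power_eq_1_iff[OF sm] d \<open>0 < p\<close> by simp
  have root_iff: "root_unity (s m) j ^ s m = 1" for j
    using root_unity_power_eq_1_iff[OF sm] by simp
  have rep_iff: "scale_rep s m j z \<longleftrightarrow> 0 < j \<and> j < s m \<and> \<not> d dvd j \<and> z = root_unity (s m) j" for j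
    unfolding scale_rep_def root_unity_def[symmetric] quotient[unfolded p_def] using m by simp
  show ?thesis
    unfolding p_def[symmetric]
  proof
    assume "\<exists>j. scale_rep s m j z"
    then show "z ^ s m = 1 \<and> z ^ p \<noteq> 1"
      using rep_iff root_prev_iff root_iff by auto
  next
    assume z: "z ^ s m = 1 \<and> z ^ p \<noteq> 1"
    then obtain j where j: "j < s m" "z = root_unity (s m) j"
      using roots_unityE[OF sm] by blast
    then have "\<not> d dvd j"
      using z root_prev_iff by simp
    then have "scale_rep s m j z"
      using rep_iff j by (cases "j = 0") auto
    then show "\<exists>j. scale_rep s m j z" ..
  qed
qed

lemma lambda_sl_eq_level:
  assumes chain: "dvd_chain s" and m: "1 \<le> m"
    and z: "z ^ s m = 1" "z ^ scale_prev s m \<noteq> 1"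
  shows "lambda_sl s l z = l m"
proof -
  have level_le: "k' \<le> k" if "1 \<le> k" "z ^ s k = 1" "z ^ scale_prev s k' \<noteq> 1" for k k'
    using that power_eq_1_if_dvd[OF scale_dvd_prev[OF chain, of k k']] by force
  have "(THE m'. \<exists>j. scale_rep s m' j z) = m"
  proof (rule the_equality)
    show "\<exists>j. scale_rep s m j z"
      using scale_rep_iff[OF chain m] z by blast
  next
    fix m' assume "\<exists>j. scale_rep s m' j z"
    moreover from this have "1 \<le> m'"
      unfolding scale_rep_def by blast
    ultimately have "z ^ s m' = 1" "z ^ scale_prev s m' \<noteq> 1"
      using scale_rep_iff[OF chain] by blast+
    then show "m' = m"
      using level_le[of m' m] level_le[of m m'] \<open>1 \<le> m'\<close> m z by simp
  qed
  moreover have "z \<noteq> 1"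
    using z(2) by auto
  ultimately show ?thesis
    unfolding lambda_sl_def by simp
qed

locale nonarch_length_function =
  fixes S :: "nat \<Rightarrow> enat" and lam :: "complex \<Rightarrow> real"
  assumes nonarch_length: "nonarch_length S lam"
begin

lemma lam_ge_1: "z \<in> ZS S \<Longrightarrow> 1 \<le> lam z"
  and lam_eq_1_iff: "z \<in> ZS S \<Longrightarrow> lam z = 1 \<longleftrightarrow> z = 1"
  and lam_mult_le: "z1 \<in> ZS S \<Longrightarrow> z2 \<in> ZS S \<Longrightarrow> lam (z1 * z2) \<le> max (lam z1) (lam z2)"
  using nonarch_length unfolding nonarch_length_def by auto

lemma lam_1 [simp]: "lam 1 = 1"
  using lam_eq_1_iff[OF one_in_ZS] by simp

definition sublevel :: "real \<Rightarrow> complex set" where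
  "sublevel r = {z \<in> ZS S. lam z \<le> r}"

lemma sublevel_mono: "r \<le> r' \<Longrightarrow> sublevel r \<subseteq> sublevel r'"
  unfolding sublevel_def by auto

lemma finite_sublevel: "finite (sublevel r)"
proof -
  have "finite (sublevel (max r 1))"
    using nonarch_length unfolding nonarch_length_def sublevel_def by simp
  then show ?thesis
    by (rule finite_subset[OF sublevel_mono, rotated]) simp
qed

lemma one_in_sublevel: "1 \<le> r \<Longrightarrow> 1 \<in> sublevel r"
  unfolding sublevel_def using one_in_ZS by simp

lemma card_sublevel_pos: "1 \<le> r \<Longrightarrow> 0 < card (sublevel r)"
  using finite_sublevel one_in_sublevel card_gt_0_iff by blast

lemma sublevel_eq_roots_unity:
  assumes "1 \<le> r"
  shows "sublevel r = {z. z ^ card (sublevel r) = 1}"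
proof (rule finite_subgroup_eq_roots_unity[OF finite_sublevel one_in_sublevel[OF assms]])
  show "0 \<notin> sublevel r"
    unfolding sublevel_def using zero_notin_ZS by blast
  show "x * y \<in> sublevel r" if "x \<in> sublevel r" "y \<in> sublevel r" for x y
    using that mult_in_ZS lam_mult_le[of x y] unfolding sublevel_def by auto
qed

lemma finite_values_le: "finite {x \<in> lam ` ZS S. x \<le> r}"
proof -
  have "{x \<in> lam ` ZS S. x \<le> r} = lam ` sublevel r"
    unfolding sublevel_def by auto
  then show ?thesis
    using finite_sublevel by simp
qed

lemma infinite_values:
  assumes "supnat_infinite S"
  shows "infinite (lam ` ZS S)"
proof
  assume fin: "finite (lam ` ZS S)"
  have "ZS S \<subseteq> sublevel (Max (lam ` ZS S))"
    unfolding sublevel_def using fin by auto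
  then show False
    using infinite_ZS[OF assms] finite_sublevel finite_subset by blast
qed

definition sublevel_scale :: "(nat \<Rightarrow> real) \<Rightarrow> nat \<Rightarrow> nat" where
  "sublevel_scale v m = card (sublevel (v m))"

context
  fixes v :: "nat \<Rightarrow> real"
  assumes v_mono: "strict_mono v" and range_v: "range v = lam ` ZS S"
begin

lemma v_0: "v 0 = 1"
proof -
  obtain k where "v k = 1"
    using range_v one_in_ZS lam_1 by (metis image_eqI rangeE)
  moreover obtain z where "z \<in> ZS S" "v 0 = lam z"
    using range_v by (metis image_iff rangeI)
  ultimately show ?thesis
    using lam_ge_1 strict_mono_less_eq[OF v_mono, of 0 k] by fastforce
qed

lemma v_less_Suc: "v m < v (Suc m)"
  using v_mono by (simp add: strict_mono_Suc_iff)

lemma v_ge_1: "1 \<le> v m"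
  using strict_mono_less_eq[OF v_mono, of 0 m] v_0 by simp

lemma v_gt_1: "1 \<le> m \<Longrightarrow> 1 < v m"
  using strict_mono_less[OF v_mono, of 0 m] v_0 by simp

lemma filterlim_v_at_top: "filterlim v at_top sequentially"
  unfolding filterlim_at_top
proof
  fix r
  have "v ` {m. v m \<le> r} \<subseteq> {x \<in> lam ` ZS S. x \<le> r}"
    using range_v by auto
  then have "finite {m. v m \<le> r}"
    using finite_values_le strict_mono_imp_inj_on[OF v_mono]
    by (metis finite_imageD finite_subset inj_on_subset subset_UNIV)
  then show "eventually (\<lambda>m. r \<le> v m) sequentially"
    unfolding cofinite_eq_sequentially[symmetric] eventually_cofinite
    by (rule finite_subset[rotated]) auto
qed

lemma sublevel_v_eq_roots_unity: "sublevel (v m) = {z. z ^ sublevel_scale v m = 1}"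
  unfolding sublevel_scale_def using sublevel_eq_roots_unity[OF v_ge_1] .

lemma sublevel_scale_pos: "0 < sublevel_scale v m"
  unfolding sublevel_scale_def using card_sublevel_pos[OF v_ge_1] .

lemma sublevel_scale_0: "sublevel_scale v 0 = 1"
proof -
  have "sublevel (v 0) = {1}"
    unfolding v_0 sublevel_def using one_in_ZS lam_ge_1 lam_eq_1_iff by force
  then show ?thesis
    unfolding sublevel_scale_def by simp
qed

lemma sublevel_scale_dvd_Suc: "sublevel_scale v m dvd sublevel_scale v (Suc m)"
proof -
  have "root_unity (sublevel_scale v m) 1 \<in> sublevel (v m)"
    using sublevel_v_eq_roots_unity root_unity_power_eq_1_iff[OF sublevel_scale_pos] by simp
  then have "root_unity (sublevel_scale v m) 1 \<in> sublevel (v (Suc m))"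
    using sublevel_mono[OF less_imp_le[OF v_less_Suc]] by blast
  then show ?thesis
    using sublevel_v_eq_roots_unity root_unity_power_eq_1_iff[OF sublevel_scale_pos] by simp
qed

lemma sublevel_scale_less_Suc: "sublevel_scale v m < sublevel_scale v (Suc m)"
proof -
  obtain z where z: "z \<in> ZS S" "lam z = v (Suc m)"
    using range_v by (metis imageE rangeI)
  then have "z \<in> sublevel (v (Suc m)) - sublevel (v m)"
    using v_less_Suc[of m] unfolding sublevel_def by auto
  then have "sublevel (v m) \<subset> sublevel (v (Suc m))"
    using sublevel_mono[OF less_imp_le[OF v_less_Suc]] by blast
  then show ?thesis
    unfolding sublevel_scale_def using finite_sublevel by (rule psubset_card_mono[rotated])
qed

lemma dvd_chain_sublevel_scale: "dvd_chain (sublevel_scale v)"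
  unfolding dvd_chain_def using sublevel_scale_pos sublevel_scale_dvd_Suc by blast

lemma ZS_eq_UN_roots_unity: "ZS S = (\<Union>m\<in>{1..}. {z. z ^ sublevel_scale v m = 1})"
proof (intro equalityI subsetI)
  fix z assume "z \<in> ZS S"
  then obtain m where "lam z = v m"
    using range_v by (metis imageI rangeE)
  then have "z \<in> sublevel (v (Suc m))"
    using \<open>z \<in> ZS S\<close> v_less_Suc[of m] unfolding sublevel_def by simp
  then show "z \<in> (\<Union>m\<in>{1..}. {z. z ^ sublevel_scale v m = 1})"
    using sublevel_v_eq_roots_unity by auto
next
  fix z :: complex assume "z \<in> (\<Union>m\<in>{1..}. {z. z ^ sublevel_scale v m = 1})"
  then show "z \<in> ZS S"
    using sublevel_v_eq_roots_unity unfolding sublevel_def by auto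
qed

lemma is_scale_sublevel_scale: "is_scale S (sublevel_scale v)"
  unfolding is_scale_def
  using sublevel_scale_pos sublevel_scale_dvd_Suc sublevel_scale_less_Suc
    SUP_multiplicity_eq_exponent[OF ZS_eq_UN_roots_unity sublevel_scale_pos]
  by blast

lemma lam_eq_lambda_sl:
  assumes z: "z \<in> ZS S"
  shows "lam z = lambda_sl (sublevel_scale v) v z"
proof (cases "z = 1")
  case True
  then show ?thesis
    unfolding lambda_sl_def by simp
next
  case False
  obtain m where m: "lam z = v m"
    using z range_v by (metis imageI rangeE)
  have "1 \<le> m"
    using m v_0 lam_eq_1_iff[OF z] False by (cases m) auto
  have prev: "scale_prev (sublevel_scale v) m = sublevel_scale v (m - 1)"
    using sublevel_scale_0 by (simp add: scale_prev_def)
  have "z \<in> sublevel (v m)" "z \<notin> sublevel (v (m - 1))"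
    using z m strict_mono_less[OF v_mono, of "m - 1" m] \<open>1 \<le> m\<close> unfolding sublevel_def by auto
  then have "z ^ sublevel_scale v m = 1" "z ^ scale_prev (sublevel_scale v) m \<noteq> 1"
    unfolding prev sublevel_v_eq_roots_unity by auto
  then show ?thesis
    using lambda_sl_eq_level[OF dvd_chain_sublevel_scale \<open>1 \<le> m\<close>] m by simp
qed

end

end

theorem mainTheorem4:
  fixes S :: "nat \<Rightarrow> enat" and lam :: "complex \<Rightarrow> real"
  assumes "supnat_infinite S"
    and "nonarch_length S lam"
  shows "\<exists>s l. is_scale S s \<and>
           (\<forall>m\<ge>1. l m > 1 \<and> l m < l (Suc m)) \<and>
           filterlim l at_top sequentially \<and>
           (\<forall>z\<in>ZS S. lam z = lambda_sl s l z)"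
proof -
  interpret nonarch_length_function S lam
    by unfold_locales (rule assms(2))
  obtain v :: "nat \<Rightarrow> real" where v: "strict_mono v" "range v = lam ` ZS S"
    by (rule strict_mono_enumeration[OF infinite_values[OF assms(1)] finite_values_le])
  show ?thesis
  proof (intro exI conjI allI impI ballI)
    show "is_scale S (sublevel_scale v)"
      using is_scale_sublevel_scale[OF v] .
    show "filterlim v at_top sequentially"
      using filterlim_v_at_top[OF v] .
    fix m :: nat assume "1 \<le> m"
    then show "1 < v m"
      by (rule v_gt_1[OF v])
    show "v m < v (Suc m)"
      using v_less_Suc[OF v] .
  next
    fix z assume "z \<in> ZS S"
    then show "lam z = lambda_sl (sublevel_scale v) v z"
      by (rule lam_eq_lambda_sl[OF v])
  qed
qed

end
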